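(* Let $k\ge2$, $n\ge1$ be integers, let $\bar{\mathcal{P}}\in\mathbb{R}^{[k,n]}$ be a columnwise-substochastic tensor, $\mathbf{v}\in\mathbb{R}^n$ a stochastic vector and $\alpha\in[0,1)$. Let $\Delta:=\{\mathbf{y}\in\mathbb{R}^n_+:\mathbf{e}^T\mathbf{y}\le(1-\alpha)^{-\frac{1}{k-1}}\}$ and $\Phi(\mathbf{y}):=(1+\alpha\mathbf{e}^T(\bar{\mathcal{P}}\mathbf{y}^{k-1}))^{-\frac{k-2}{k-1}}(\mathbf{v}+\alpha\bar{\mathcal{P}}\mathbf{y}^{k-1})$. Define $\varsigma:=(2k-3)\alpha(1-\alpha)^{-\frac{k-2}{k-1}}$. If $\varsigma<1$, then $\Phi$ maps $\Delta$ into $\Delta$ and is a contraction on $\Delta$, i.e., $\|\Phi(\mathbf{x})-\Phi(\mathbf{y})\|_1\le\varsigma\|\mathbf{x}-\mathbf{y}\|_1$ for all $\mathbf{x},\mathbf{y}\in\Delta$.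
   Context: For $\mathcal{P}\in\mathbb{R}^{[k,n]}$ (real tensors of order $k$, dimension $n$) and $\mathbf{y}\in\mathbb{R}^n$, $(\mathcal{P}\mathbf{y}^{k-1})_i=\sum_{i_2,\dots,i_k}p_{i i_2\dots i_k}y_{i_2}\cdots y_{i_k}$. $\bar{\mathcal{P}}$ is columnwise-substochastic if its entries are nonnegative and $\sum_{i}\bar p_{i i_2\dots i_k}\le1$ for all $i_2,\dots,i_k$. $\mathbf{e}$ is the all-ones vector; a stochastic vector is nonnegative with entries summing to $1$. *)

theory Defs
  imports "HOL-Analysis.Analysis"
begin

text \<open>Tensors of order k and dimension n (n = CARD('n)) are represented as functions
  P :: 'n \<Rightarrow> 'n list \<Rightarrow> real, where P i is = p_{i i_2 ... i_k} for index lists is = [i_2,...,i_k]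
  of length k - 1. Entries at lists of other lengths are irrelevant.\<close>

definition tensor_indices :: "nat \<Rightarrow> 'n::finite list set" where
  "tensor_indices k = {is. length is = k - 1}"

definition tensor_apply :: "nat \<Rightarrow> ('n::finite \<Rightarrow> 'n list \<Rightarrow> real) \<Rightarrow> real^'n \<Rightarrow> real^'n" where
  "tensor_apply k P y = (\<chi> i. \<Sum>is\<in>tensor_indices k. P i is * prod_list (map (\<lambda>j. y $ j) is))"

definition colwise_substochastic :: "nat \<Rightarrow> ('n::finite \<Rightarrow> 'n list \<Rightarrow> real) \<Rightarrow> bool" where
  "colwise_substochastic k P \<longleftrightarrow>
     (\<forall>i. \<forall>is\<in>tensor_indices k. 0 \<le> P i is) \<and>
     (\<forall>is\<in>tensor_indices k. (\<Sum>i\<in>UNIV. P i is) \<le> 1)"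

definition stochastic_vec :: "real^'n::finite \<Rightarrow> bool" where
  "stochastic_vec v \<longleftrightarrow> (\<forall>i. 0 \<le> v $ i) \<and> (\<Sum>i\<in>UNIV. v $ i) = 1"

definition esum :: "real^'n::finite \<Rightarrow> real" where
  "esum y = (\<Sum>i\<in>UNIV. y $ i)"

definition norm1 :: "real^'n::finite \<Rightarrow> real" where
  "norm1 y = (\<Sum>i\<in>UNIV. \<bar>y $ i\<bar>)"

end

theory Submission
  imports Defs
begin

text \<open>Write a(y) = v + \<alpha> P y^{k-1} and p = (k-2)/(k-1), so that \<Phi>(y) = (e^T a)^{-p} a.
  Column substochasticity gives e^T (P y^{k-1}) \<le> (e^T y)^{k-1} \<le> 1/(1-\<alpha>) on \<Delta>, hence
  1 \<le> e^T a(y) \<le> 1/(1-\<alpha>) and e^T \<Phi>(y) = (e^T a)^{1/(k-1)} \<le> (1-\<alpha>)^{-1/(k-1)}.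
  For the Lipschitz bound, rescaling by (e^T a)^{-p} is (1+p)-Lipschitz in the 1-norm on nonnegative
  vectors of mass at least 1, because by convexity of t^{-p} the change of the factor costs at most
  p times the change of mass; and y \<mapsto> P y^{k-1} is (k-1) R^{k-2}-Lipschitz on \<Delta>,
  R = (1-\<alpha>)^{-1/(k-1)}, by telescoping the products one factor at a time. Since
  (1+p)(k-1) = 2k-3, the product of the two constants is \<sigma>. The hypothesis \<sigma> < 1 is used by
  neither inequality; it only makes the bound a contraction.\<close>

lemma sum_lists_length_Suc:
  fixes g :: "'a list \<Rightarrow> 'b::comm_monoid_add"
  shows "(\<Sum>xs\<in>{xs. length xs = Suc n}. g xs) = (\<Sum>a\<in>UNIV. \<Sum>xs\<in>{xs. length xs = n}. g (a # xs))"
proof -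
  have lists_Suc: "{xs::'a list. length xs = Suc n} = (\<lambda>(a, xs). a # xs) ` (UNIV \<times> {xs. length xs = n})"
    by (auto simp: length_Suc_conv image_iff)
  have "inj_on (\<lambda>(a, xs). a # xs) (UNIV \<times> {xs::'a list. length xs = n})"
    by (auto simp: inj_on_def)
  then have "(\<Sum>xs\<in>{xs. length xs = Suc n}. g xs) = (\<Sum>(a, xs)\<in>UNIV \<times> {xs. length xs = n}. g (a # xs))"
    unfolding lists_Suc by (simp add: sum.reindex case_prod_unfold)
  also have "\<dots> = (\<Sum>a\<in>UNIV. \<Sum>xs\<in>{xs. length xs = n}. g (a # xs))"
    by (rule sum.cartesian_product[symmetric])
  finally show ?thesis .
qed

lemma sum_prod_list_lists_length:
  fixes f :: "'a::finite \<Rightarrow> 'b::comm_semiring_1"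
  shows "(\<Sum>xs\<in>{xs. length xs = n}. prod_list (map f xs)) = (\<Sum>a\<in>UNIV. f a) ^ n"
proof (induction n)
  case 0
  have "{xs::'a list. length xs = 0} = {[]}" by auto
  then show ?case by simp
next
  case (Suc n)
  then show ?case
    by (simp add: sum_lists_length_Suc sum_distrib_left[symmetric] sum_distrib_right[symmetric])
qed

lemma prod_list_map_nonneg:
  fixes f :: "'a \<Rightarrow> 'b::ordered_semiring_1"
  shows "(\<And>a. 0 \<le> f a) \<Longrightarrow> 0 \<le> prod_list (map f xs)"
  by (induction xs) auto

lemma sum_abs_prod_list_diff_le:
  fixes x y :: "'a::finite \<Rightarrow> real"
  assumes x_nonneg: "\<And>a. 0 \<le> x a" and y_nonneg: "\<And>a. 0 \<le> y a"
    and x_le: "(\<Sum>a\<in>UNIV. x a) \<le> R" and y_le: "(\<Sum>a\<in>UNIV. y a) \<le> R"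
  shows "(\<Sum>xs\<in>{xs. length xs = n}. \<bar>prod_list (map x xs) - prod_list (map y xs)\<bar>)
          \<le> real n * R ^ (n - 1) * (\<Sum>a\<in>UNIV. \<bar>x a - y a\<bar>)"
proof (induction n)
  case 0
  have "{xs::'a list. length xs = 0} = {[]}" by auto
  then show ?case by simp
next
  case (Suc n)
  let ?D = "\<Sum>a\<in>UNIV. \<bar>x a - y a\<bar>"
  let ?X = "\<lambda>xs. prod_list (map x xs)" and ?Y = "\<lambda>xs. prod_list (map y xs)"
  have R_nonneg: "0 \<le> R" using y_nonneg y_le by (meson order.trans sum_nonneg)
  have step: "\<bar>x a * ?X xs - y a * ?Y xs\<bar> \<le> \<bar>x a - y a\<bar> * ?X xs + y a * \<bar>?X xs - ?Y xs\<bar>" for a xs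
  proof -
    have "x a * ?X xs - y a * ?Y xs = (x a - y a) * ?X xs + y a * (?X xs - ?Y xs)"
      by (simp add: algebra_simps)
    then show ?thesis
      using abs_triangle_ineq[of "(x a - y a) * ?X xs" "y a * (?X xs - ?Y xs)"]
        y_nonneg[of a] prod_list_map_nonneg[of x xs] x_nonneg
      by (simp add: abs_mult)
  qed
  have "(\<Sum>xs\<in>{xs. length xs = Suc n}. \<bar>?X xs - ?Y xs\<bar>)
      = (\<Sum>a\<in>UNIV. \<Sum>xs\<in>{xs. length xs = n}. \<bar>x a * ?X xs - y a * ?Y xs\<bar>)"
    by (simp add: sum_lists_length_Suc)
  also have "\<dots> \<le> (\<Sum>a\<in>UNIV. \<Sum>xs\<in>{xs. length xs = n}. \<bar>x a - y a\<bar> * ?X xs + y a * \<bar>?X xs - ?Y xs\<bar>)"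
    by (intro sum_mono step)
  also have "\<dots> = (\<Sum>a\<in>UNIV. \<bar>x a - y a\<bar> * (\<Sum>a\<in>UNIV. x a) ^ n
       + y a * (\<Sum>xs\<in>{xs. length xs = n}. \<bar>?X xs - ?Y xs\<bar>))"
    by (simp add: sum.distrib sum_distrib_left[symmetric] sum_prod_list_lists_length)
  also have "\<dots> \<le> (\<Sum>a\<in>UNIV. \<bar>x a - y a\<bar> * R ^ n + y a * (real n * R ^ (n - 1) * ?D))"
    using x_nonneg y_nonneg x_le Suc.IH
    by (intro sum_mono add_mono mult_left_mono power_mono) (auto intro: sum_nonneg)
  also have "\<dots> = ?D * R ^ n + (\<Sum>a\<in>UNIV. y a) * (real n * R ^ (n - 1) * ?D)"
    by (simp add: sum.distrib sum_distrib_right)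
  also have "\<dots> \<le> ?D * R ^ n + R * (real n * R ^ (n - 1) * ?D)"
    using y_le R_nonneg by (intro add_left_mono mult_right_mono) (auto intro: sum_nonneg)
  also have "\<dots> = real (Suc n) * R ^ (Suc n - 1) * ?D"
    by (cases n) (auto simp: algebra_simps)
  finally show ?case .
qed

lemma powr_neg_ge_tangent:
  fixes x p :: real
  assumes "0 < x" "0 \<le> p"
  shows "1 - p * (x - 1) \<le> x powr (- p)"
proof -
  have "1 - p * (x - 1) \<le> 1 + - p * ln x"
    using ln_le_minus_one[OF \<open>0 < x\<close>] \<open>0 \<le> p\<close> by (simp add: mult_left_mono)
  also have "\<dots> \<le> exp (- p * ln x)"
    by (rule exp_ge_add_one_self)
  also have "\<dots> = x powr (- p)"
    using \<open>0 < x\<close> by (simp add: powr_def)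
  finally show ?thesis .
qed

lemma powr_neg_diff_le:
  fixes u w p :: real
  assumes "1 \<le> u" "u \<le> w" "0 \<le> p"
  shows "(u powr (- p) - w powr (- p)) * u \<le> p * (w - u)"
proof -
  have u_pos: "0 < u" using assms by simp
  have "w powr (- p) = u powr (- p) * (w / u) powr (- p)"
    using u_pos assms(2) by (simp add: powr_divide)
  then have "(u powr (- p) - w powr (- p)) * u = u powr (- p) * ((1 - (w / u) powr (- p)) * u)"
    by (simp add: algebra_simps)
  also have "\<dots> \<le> u powr (- p) * (p * (w / u - 1) * u)"
    using powr_neg_ge_tangent[of "w / u" p] u_pos assms
    by (intro mult_left_mono mult_right_mono) auto
  also have "\<dots> = u powr (- p) * (p * (w - u))"
    using u_pos by (simp add: field_simps)
  also have "\<dots> \<le> p * (w - u)"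
    using assms powr_mono[of "- p" 0 u] by (intro mult_left_le_one_le) auto
  finally show ?thesis .
qed

lemma esum_add: "esum (a + b) = esum a + esum b"
  by (simp add: esum_def sum.distrib)

lemma esum_scaleR: "esum (c *\<^sub>R a) = c * esum a"
  by (simp add: esum_def sum_distrib_left)

lemma esum_nonneg: "(\<And>i. 0 \<le> a $ i) \<Longrightarrow> 0 \<le> esum a"
  by (simp add: esum_def sum_nonneg)

lemma norm1_triangle: "norm1 (a + b) \<le> norm1 a + norm1 b"
  unfolding norm1_def sum.distrib[symmetric] by (intro sum_mono) (simp add: abs_triangle_ineq)

lemma norm1_scaleR: "norm1 (c *\<^sub>R a) = \<bar>c\<bar> * norm1 a"
  by (simp add: norm1_def sum_distrib_left abs_mult)

lemma norm1_eq_esum: "(\<And>i. 0 \<le> a $ i) \<Longrightarrow> norm1 a = esum a"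
  by (simp add: norm1_def esum_def)

lemma norm1_minus_commute: "norm1 (a - b) = norm1 (b - a)"
  by (simp add: norm1_def abs_minus_commute)

lemma abs_esum_diff_le: "\<bar>esum a - esum b\<bar> \<le> norm1 (a - b)"
  unfolding norm1_def esum_def sum_subtractf[symmetric] by simp

lemma norm1_powr_rescale_diff_le_ordered:
  assumes a_nonneg: "\<And>i. 0 \<le> a $ i" and b_nonneg: "\<And>i. 0 \<le> b $ i"
    and "1 \<le> esum b" "esum b \<le> esum a" "0 \<le> p"
  shows "norm1 (esum a powr (- p) *\<^sub>R a - esum b powr (- p) *\<^sub>R b) \<le> (1 + p) * norm1 (a - b)"
proof -
  define ca cb where "ca = esum a powr (- p)" and "cb = esum b powr (- p)"
  have ca_le_cb: "ca \<le> cb" and ca_le_1: "ca \<le> 1"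
    using assms powr_mono2'[of "- p" "esum b" "esum a"] powr_mono[of "- p" 0 "esum a"]
    by (auto simp: ca_def cb_def)
  have "ca *\<^sub>R a - cb *\<^sub>R b = ca *\<^sub>R (a - b) + (ca - cb) *\<^sub>R b"
    by (simp add: algebra_simps)
  then have "norm1 (ca *\<^sub>R a - cb *\<^sub>R b) \<le> ca * norm1 (a - b) + (cb - ca) * esum b"
    using norm1_triangle[of "ca *\<^sub>R (a - b)" "(ca - cb) *\<^sub>R b"] ca_le_cb
    by (simp add: norm1_scaleR norm1_eq_esum[OF b_nonneg] ca_def)
  also have "\<dots> \<le> 1 * norm1 (a - b) + p * (esum a - esum b)"
    using assms ca_le_1 powr_neg_diff_le[of "esum b" "esum a" p]
    by (intro add_mono mult_right_mono) (auto simp: ca_def cb_def norm1_def mult.commute)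
  also have "\<dots> \<le> (1 + p) * norm1 (a - b)"
    using abs_esum_diff_le[of a b] \<open>0 \<le> p\<close> mult_left_mono[of "esum a - esum b" "norm1 (a - b)" p]
    by (simp add: algebra_simps)
  finally show ?thesis by (simp add: ca_def cb_def)
qed

lemma norm1_powr_rescale_diff_le:
  assumes "\<And>i. 0 \<le> a $ i" "\<And>i. 0 \<le> b $ i" "1 \<le> esum a" "1 \<le> esum b" "0 \<le> p"
  shows "norm1 (esum a powr (- p) *\<^sub>R a - esum b powr (- p) *\<^sub>R b) \<le> (1 + p) * norm1 (a - b)"
proof (cases "esum b \<le> esum a")
  case True
  then show ?thesis using assms by (intro norm1_powr_rescale_diff_le_ordered)
next
  case False
  then have "norm1 (esum b powr (- p) *\<^sub>R b - esum a powr (- p) *\<^sub>R a) \<le> (1 + p) * norm1 (b - a)"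
    using assms by (intro norm1_powr_rescale_diff_le_ordered) auto
  then show ?thesis by (metis norm1_minus_commute)
qed

lemma tensor_apply_nonneg:
  assumes "colwise_substochastic k P" "\<And>i. 0 \<le> y $ i"
  shows "0 \<le> tensor_apply k P y $ i"
  using assms unfolding tensor_apply_def colwise_substochastic_def
  by (auto intro!: sum_nonneg mult_nonneg_nonneg prod_list_map_nonneg)

lemma esum_tensor_apply_le:
  fixes P :: "'n::finite \<Rightarrow> 'n list \<Rightarrow> real"
  assumes "colwise_substochastic k P" "\<And>i. 0 \<le> y $ i"
  shows "esum (tensor_apply k P y) \<le> esum y ^ (k - 1)"
proof -
  let ?Y = "\<lambda>is. prod_list (map (\<lambda>j. y $ j) is)"
  have "esum (tensor_apply k P y) = (\<Sum>is\<in>tensor_indices k. (\<Sum>i\<in>UNIV. P i is) * ?Y is)"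
    unfolding esum_def tensor_apply_def by (simp add: sum.swap[of _ UNIV] sum_distrib_right)
  also have "\<dots> \<le> (\<Sum>is\<in>tensor_indices k. 1 * ?Y is)"
    using assms unfolding colwise_substochastic_def
    by (intro sum_mono mult_right_mono) (auto intro: prod_list_map_nonneg)
  also have "\<dots> = esum y ^ (k - 1)"
    unfolding tensor_indices_def esum_def by (simp add: sum_prod_list_lists_length)
  finally show ?thesis .
qed

lemma norm1_tensor_apply_diff_le:
  fixes P :: "'n::finite \<Rightarrow> 'n list \<Rightarrow> real"
  assumes "colwise_substochastic k P" "\<And>i. 0 \<le> x $ i" "\<And>i. 0 \<le> y $ i"
    "esum x \<le> R" "esum y \<le> R"
  shows "norm1 (tensor_apply k P x - tensor_apply k P y) \<le> real (k - 1) * R ^ (k - 2) * norm1 (x - y)"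
proof -
  let ?X = "\<lambda>is. prod_list (map (\<lambda>j. x $ j) is)"
  let ?Y = "\<lambda>is. prod_list (map (\<lambda>j. y $ j) is)"
  have "norm1 (tensor_apply k P x - tensor_apply k P y)
      = (\<Sum>i\<in>UNIV. \<bar>\<Sum>is\<in>tensor_indices k. P i is * (?X is - ?Y is)\<bar>)"
    unfolding norm1_def tensor_apply_def by (simp add: sum_subtractf[symmetric] algebra_simps)
  also have "\<dots> \<le> (\<Sum>i\<in>UNIV. \<Sum>is\<in>tensor_indices k. P i is * \<bar>?X is - ?Y is\<bar>)"
    using assms(1) unfolding colwise_substochastic_def
    by (intro sum_mono order.trans[OF sum_abs]) (simp add: abs_mult)
  also have "\<dots> = (\<Sum>is\<in>tensor_indices k. (\<Sum>i\<in>UNIV. P i is) * \<bar>?X is - ?Y is\<bar>)"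
    by (simp add: sum.swap[of _ UNIV] sum_distrib_right)
  also have "\<dots> \<le> (\<Sum>is\<in>tensor_indices k. 1 * \<bar>?X is - ?Y is\<bar>)"
    using assms(1) unfolding colwise_substochastic_def
    by (intro sum_mono mult_right_mono) auto
  also have "\<dots> \<le> real (k - 1) * R ^ (k - 1 - 1) * norm1 (x - y)"
    using sum_abs_prod_list_diff_le[of "\<lambda>j. x $ j" "\<lambda>j. y $ j" R "k - 1"] assms(2-5)
    by (simp add: tensor_indices_def esum_def norm1_def)
  finally show ?thesis by (simp add: numeral_2_eq_2)
qed

lemma esum_powr_rescale_le:
  assumes "0 < esum a" "esum a \<le> M" "0 \<le> q"
  shows "esum (esum a powr (- (1 - q)) *\<^sub>R a) \<le> M powr q"
proof -
  have "esum (esum a powr (- (1 - q)) *\<^sub>R a) = esum a powr (- (1 - q)) * esum a powr 1"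
    using assms by (simp add: esum_scaleR)
  also have "\<dots> = esum a powr q"
    by (simp only: powr_add[symmetric]) simp
  also have "\<dots> \<le> M powr q"
    using assms by (intro powr_mono2) auto
  finally show ?thesis .
qed

lemma power_powr_neg_inverse_pred:
  assumes "k \<ge> 2" "0 < b"
  shows "(b powr (- 1 / (real k - 1))) ^ (k - 1) = 1 / b"
    and "(b powr (- 1 / (real k - 1))) ^ (k - 2) = b powr (- (real k - 2) / (real k - 1))"
proof -
  have "(b powr (- 1 / (real k - 1))) ^ (k - 1) = b powr (real (k - 1) * (- 1 / (real k - 1)))"
    using assms by (intro powr_power) simp
  also have "real (k - 1) * (- 1 / (real k - 1)) = - 1"
    using assms by (simp add: of_nat_diff)
  finally show "(b powr (- 1 / (real k - 1))) ^ (k - 1) = 1 / b"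
    using assms by simp
  have "(b powr (- 1 / (real k - 1))) ^ (k - 2) = b powr (real (k - 2) * (- 1 / (real k - 1)))"
    using assms by (intro powr_power) simp
  also have "real (k - 2) * (- 1 / (real k - 1)) = - (real k - 2) / (real k - 1)"
    using assms by (simp add: of_nat_diff field_simps)
  finally show "(b powr (- 1 / (real k - 1))) ^ (k - 2) = b powr (- (real k - 2) / (real k - 1))" .
qed

lemma esum_affine_tensor_apply_bounds:
  fixes P :: "'n::finite \<Rightarrow> 'n list \<Rightarrow> real"
  assumes "colwise_substochastic k P" "esum v = 1" "0 \<le> \<alpha>" "\<alpha> < 1" "k \<ge> 2"
    and "\<And>i. 0 \<le> y $ i" "esum y \<le> (1 - \<alpha>) powr (- 1 / (real k - 1))"
  shows "1 \<le> esum (v + \<alpha> *\<^sub>R tensor_apply k P y)"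
    and "esum (v + \<alpha> *\<^sub>R tensor_apply k P y) \<le> 1 / (1 - \<alpha>)"
proof -
  let ?s = "esum (tensor_apply k P y)"
  have "0 \<le> ?s"
    using assms by (intro esum_nonneg tensor_apply_nonneg)
  then show "1 \<le> esum (v + \<alpha> *\<^sub>R tensor_apply k P y)"
    using assms by (simp add: esum_add esum_scaleR)
  have "?s \<le> esum y ^ (k - 1)"
    using assms by (intro esum_tensor_apply_le)
  also have "\<dots> \<le> ((1 - \<alpha>) powr (- 1 / (real k - 1))) ^ (k - 1)"
    using assms by (intro power_mono esum_nonneg)
  also have "\<dots> = 1 / (1 - \<alpha>)"
    using assms by (intro power_powr_neg_inverse_pred) auto
  finally have "\<alpha> * ?s \<le> \<alpha> * (1 / (1 - \<alpha>))"
    using assms by (intro mult_left_mono)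
  then show "esum (v + \<alpha> *\<^sub>R tensor_apply k P y) \<le> 1 / (1 - \<alpha>)"
    using assms by (simp add: esum_add esum_scaleR field_simps)
qed

lemma contraction_factor_eq:
  assumes "k \<ge> 2" "\<alpha> < 1"
  shows "(1 + (1 - 1 / (real k - 1))) * \<alpha> * (real (k - 1) * ((1 - \<alpha>) powr (- 1 / (real k - 1))) ^ (k - 2))
    = (2 * real k - 3) * \<alpha> * (1 - \<alpha>) powr (- (real k - 2) / (real k - 1))"
proof -
  have "(1 + (1 - 1 / (real k - 1))) * real (k - 1) = 2 * real k - 3"
    using assms by (simp add: of_nat_diff field_simps)
  then show ?thesis
    using power_powr_neg_inverse_pred(2)[of k "1 - \<alpha>"] assms by (simp add: mult_ac)
qed

theorem theorem3p10:
  fixes k :: nat and P :: "'n::finite \<Rightarrow> 'n list \<Rightarrow> real" and v :: "real^'n" and \<alpha> :: real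
  assumes "k \<ge> 2"
    and "colwise_substochastic k P"
    and "stochastic_vec v"
    and "0 \<le> \<alpha>" and "\<alpha> < 1"
  defines "\<Delta> \<equiv> {y :: real^'n. (\<forall>i. 0 \<le> y $ i) \<and> esum y \<le> (1 - \<alpha>) powr (- 1 / (real k - 1))}"
    and "\<Phi> \<equiv> (\<lambda>y :: real^'n. (1 + \<alpha> * esum (tensor_apply k P y)) powr (- (real k - 2) / (real k - 1))
                  *\<^sub>R (v + \<alpha> *\<^sub>R tensor_apply k P y))"
    and "\<sigma> \<equiv> (2 * real k - 3) * \<alpha> * (1 - \<alpha>) powr (- (real k - 2) / (real k - 1))"
  assumes "\<sigma> < 1"
  shows "\<Phi> ` \<Delta> \<subseteq> \<Delta> \<and> (\<forall>x\<in>\<Delta>. \<forall>y\<in>\<Delta>. norm1 (\<Phi> x - \<Phi> y) \<le> \<sigma> * norm1 (x - y))"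
proof -
  note k_ge_2 = \<open>k \<ge> 2\<close> and substochastic = \<open>colwise_substochastic k P\<close>
  define T where "T = tensor_apply k P"
  define a where "a = (\<lambda>y. v + \<alpha> *\<^sub>R T y)"
  define q where "q = 1 / (real k - 1)"
  define R where "R = (1 - \<alpha>) powr (- 1 / (real k - 1))"
  have q_bounds: "0 \<le> q" "q \<le> 1" and exponent_eq: "- (real k - 2) / (real k - 1) = - (1 - q)"
    using k_ge_2 by (auto simp: q_def field_simps)
  have v_nonneg: "\<And>i. 0 \<le> v $ i" and esum_v: "esum v = 1"
    using \<open>stochastic_vec v\<close> by (auto simp: stochastic_vec_def esum_def)
  have \<Delta>_eq: "\<Delta> = {y. (\<forall>i. 0 \<le> y $ i) \<and> esum y \<le> R}"
    by (simp add: \<Delta>_def R_def)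
  have \<Phi>_eq: "\<Phi> y = esum (a y) powr (- (1 - q)) *\<^sub>R a y" for y
    unfolding \<Phi>_def exponent_eq by (simp add: a_def T_def esum_add esum_scaleR esum_v)
  have a_nonneg: "0 \<le> a y $ i" if "y \<in> \<Delta>" for y i
    using that v_nonneg \<open>0 \<le> \<alpha>\<close> tensor_apply_nonneg[OF substochastic] by (auto simp: \<Delta>_eq a_def T_def)
  have esum_a_bounds: "1 \<le> esum (a y)" "esum (a y) \<le> 1 / (1 - \<alpha>)" if "y \<in> \<Delta>" for y
    using that esum_affine_tensor_apply_bounds[OF substochastic esum_v \<open>0 \<le> \<alpha>\<close> \<open>\<alpha> < 1\<close> k_ge_2]
    by (auto simp: \<Delta>_def a_def T_def)
  have "\<Phi> y \<in> \<Delta>" if "y \<in> \<Delta>" for y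
    using esum_powr_rescale_le[of "a y" "1 / (1 - \<alpha>)" q] esum_a_bounds[OF that] q_bounds
      a_nonneg[OF that] \<open>0 \<le> \<alpha>\<close> \<open>\<alpha> < 1\<close>
    by (simp add: \<Delta>_eq \<Phi>_eq R_def q_def powr_divide powr_minus_divide)
  moreover have "norm1 (\<Phi> x - \<Phi> y) \<le> \<sigma> * norm1 (x - y)" if "x \<in> \<Delta>" "y \<in> \<Delta>" for x y
  proof -
    have "norm1 (\<Phi> x - \<Phi> y) \<le> (1 + (1 - q)) * norm1 (a x - a y)"
      unfolding \<Phi>_eq using that esum_a_bounds q_bounds
      by (intro norm1_powr_rescale_diff_le a_nonneg) auto
    also have "\<dots> = (1 + (1 - q)) * \<alpha> * norm1 (T x - T y)"
      using \<open>0 \<le> \<alpha>\<close> by (simp add: a_def norm1_scaleR scaleR_diff_right[symmetric])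
    also have "\<dots> \<le> (1 + (1 - q)) * \<alpha> * (real (k - 1) * R ^ (k - 2) * norm1 (x - y))"
      using that q_bounds \<open>0 \<le> \<alpha>\<close> norm1_tensor_apply_diff_le[OF substochastic]
      by (intro mult_left_mono) (auto simp: \<Delta>_eq T_def)
    also have "\<dots> = \<sigma> * norm1 (x - y)"
      unfolding \<sigma>_def R_def q_def contraction_factor_eq[OF k_ge_2 \<open>\<alpha> < 1\<close>, symmetric]
      by (simp only: mult.assoc)
    finally show ?thesis .
  qed
  ultimately show ?thesis by blast
qed

end
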